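(* In the ternary soft heap with threshold $r_0=\max(2,\lceil\lg(1/\epsilon)\rceil)$, for every item $e$ stored at a node of rank $r$, $|C(e)|\le c_r$ where $c_r=0$ for $r\le r_0$ and $c_r=2^{r-r_0}-1$ for $r>r_0$.
   Context: Ternary soft heap with error parameter $0<\epsilon<1$ and threshold $r_0=\max(2,\lceil\lg(1/\epsilon)\rceil)$ ($\lg$ = binary logarithm). Items are (key, value) pairs with distinct keys from a totally ordered universe. A rank-$r$ tree is a perfectly balanced rooted tree in which every internal node has exactly $3$ children and all $3^r$ leaves are at depth $r$; a node whose subtree has height $r$ has rank $r$. Each leaf corresponds to a distinct insertion. Each node holds at most one item (it may be empty); the tree is heap-ordered (an item's key is at most the keys of items at descendants). Each item $e$ held at a node carries a corruption-set $C(e)$ (empty when inserted). The heap is a list of trees in nondecreasing rank order, with at most $2$ trees of each rank, together with suffix-min references to roots. \textsf{insert}$(e)$: add a rank-$0$ tree holding $e$ at the front; while the first three trees have equal rank $r$, link them: create a new node of rank $r+1$ with the three roots as children and fill it. Filling an empty node $v$ of rank $r$: a single pull moves to $v$ the minimum-key item among $v$'s children and then recursively fills the child it came from (a node whose subtree holds no items stays empty). If $r\le r_0$, $v$ is filled by one pull; if $r>r_0$, two items $e_1,e_2$ with $\mathrm{key}(e_1)\le\mathrm{key}(e_2)$ are pulled up successively, $e_1$ and all of $C(e_1)$ are added to $C(e_2)$ ($e_1$ becomes corrupted), and $e_2$ is stored at $v$ (if only one item is available, it is stored). \textsf{extract-min}: let $e$ be the minimum-key item among roots; if $C(e)\neq\emptyset$,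 remove and return an item of $C(e)$ with current key $\mathrm{key}(e)$; otherwise remove $e$, refill its root, update suffix-min references, and return $e$ with the corruptions created. Corrupted items are exactly those in corruption-sets; an item in $C(e')$ has current key $\mathrm{key}(e')$. *)

theory Defs
  imports Complex_Main
begin

text \<open>A node holds an optional item together with
  its corruption-set (a set of items).  Suffix-min references are pure caches
  of the minimum root and are not modelled.\<close>

type_synonym ('k, 'v) item = "'k \<times> 'v"
type_synonym ('k, 'v) content = "(('k, 'v) item \<times> ('k, 'v) item set) option"

datatype ('k, 'v) stree = T "('k, 'v) content" "('k, 'v) stree list"

fun root :: "('k, 'v) stree \<Rightarrow> ('k, 'v) content" where
  "root (T x cs) = x"

fun kids :: "('k, 'v) stree \<Rightarrow> ('k, 'v) stree list" where
  "kids (T x cs) = cs"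

definition ckey :: "('k, 'v) content \<Rightarrow> 'k" where
  "ckey x = fst (fst (the x))"

definition pull_with ::
  "(('k::linorder, 'v) stree \<Rightarrow> ('k, 'v) stree) \<Rightarrow> ('k, 'v) stree list
     \<Rightarrow> ('k, 'v) content \<times> ('k, 'v) stree list" where
  "pull_with f cs =
     (let I = {i. i < length cs \<and> root (cs ! i) \<noteq> None} in
      if I = {} then (None, cs)
      else (let i = (ARG_MIN (\<lambda>i. ckey (root (cs ! i))) i. i \<in> I) in
            (root (cs ! i), cs[i := f (T None (kids (cs ! i)))])))"

fun fill :: "nat \<Rightarrow> nat \<Rightarrow> ('k::linorder, 'v) stree \<Rightarrow> ('k, 'v) stree" where
  "fill r0 0 t = t"
| "fill r0 (Suc r) (T x cs) =
     (if Suc r \<le> r0 then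
        (case pull_with (fill r0 r) cs of (e, cs') \<Rightarrow> T e cs')
      else
        (case pull_with (fill r0 r) cs of
           (None, cs1) \<Rightarrow> T None cs1
         | (Some (e1, C1), cs1) \<Rightarrow>
             (case pull_with (fill r0 r) cs1 of
                (None, cs2) \<Rightarrow> T (Some (e1, C1)) cs2
              | (Some (e2, C2), cs2) \<Rightarrow> T (Some (e2, C2 \<union> insert e1 C1)) cs2)))"

type_synonym ('k, 'v) sheap = "(nat \<times> ('k, 'v) stree) list"

fun carry :: "nat \<Rightarrow> ('k::linorder, 'v) sheap \<Rightarrow> ('k, 'v) sheap" where
  "carry r0 ((r1, t1) # (r2, t2) # (r3, t3) # rest) =
     (if r1 = r2 \<and> r2 = r3
      then carry r0 ((Suc r1, fill r0 (Suc r1) (T None [t1, t2, t3])) # rest)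
      else (r1, t1) # (r2, t2) # (r3, t3) # rest)"
| "carry r0 h = h"

definition sh_insert :: "nat \<Rightarrow> ('k::linorder, 'v) item \<Rightarrow> ('k, 'v) sheap \<Rightarrow> ('k, 'v) sheap" where
  "sh_insert r0 e h = carry r0 ((0, T (Some (e, {})) []) # h)"

fun node_items :: "nat \<Rightarrow> ('k, 'v) stree \<Rightarrow> (nat \<times> ('k, 'v) item \<times> ('k, 'v) item set) set" where
  "node_items r (T x cs) =
     (case x of None \<Rightarrow> {} | Some (e, C) \<Rightarrow> {(r, e, C)}) \<union> (\<Union>c\<in>set cs. node_items (r - 1) c)"

definition heap_items :: "('k, 'v) sheap \<Rightarrow> ('k, 'v) item set" where
  "heap_items h = (\<Union>(r, t)\<in>set h. \<Union>(r', e, C)\<in>node_items r t. insert e C)"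

text \<open>One extract-min step (nondeterministic only in the choice of the corrupted item
  returned).  \<open>i\<close> is the position of the tree whose root holds the minimum-key item.\<close>
inductive extract_step :: "nat \<Rightarrow> ('k::linorder, 'v) sheap \<Rightarrow> ('k, 'v) sheap \<Rightarrow> bool"
  for r0 where
  corrupted:
    "\<lbrakk> i < length h; h ! i = (r, T (Some (e, C)) cs);
       \<forall>j < length h. root (snd (h ! j)) \<noteq> None \<longrightarrow> fst e \<le> ckey (root (snd (h ! j)));
       x \<in> C \<rbrakk>
     \<Longrightarrow> extract_step r0 h (h[i := (r, T (Some (e, C - {x})) cs)])"
| clean:
    "\<lbrakk> i < length h; h ! i = (r, T (Some (e, {})) cs);
       \<forall>j < length h. root (snd (h ! j)) \<noteq> None \<longrightarrow> fst e \<le> ckey (root (snd (h ! j))) \<rbrakk>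
     \<Longrightarrow> extract_step r0 h (h[i := (r, fill r0 r (T None cs))])"

inductive reachable :: "nat \<Rightarrow> ('k::linorder, 'v) sheap \<Rightarrow> bool" for r0 where
  empty: "reachable r0 []"
| ins: "\<lbrakk> reachable r0 h; fst e \<notin> fst ` heap_items h \<rbrakk> \<Longrightarrow> reachable r0 (sh_insert r0 e h)"
| ext: "\<lbrakk> reachable r0 h; extract_step r0 h h' \<rbrakk> \<Longrightarrow> reachable r0 h'"

definition threshold :: "real \<Rightarrow> nat" where
  "threshold eps = max 2 (nat \<lceil>log 2 (1 / eps)\<rceil>)"

definition cbound :: "nat \<Rightarrow> nat \<Rightarrow> nat" where
  "cbound r0 r = (if r \<le> r0 then 0 else 2 ^ (r - r0) - 1)"

end

theory Submission
  imports Defs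
begin

text \<open>The bound is an invariant of every reachable heap, for an arbitrary threshold \<open>r0\<close>.  Below the threshold a fill pulls up a single
  item, so no corruption arises.  Above it, the item stored at a node of rank \<open>r + 1\<close> absorbs
  the corruption-set of another item pulled from a child of rank \<open>r\<close>, together with that item
  itself; hence \<open>c (r + 1) \<le> 2 c r + 1\<close>, which \<open>2 ^ (r - r0) - 1\<close> satisfies with equality.
  Insertion only links and fills, and extract-min only shrinks a corruption-set or refills a
  root, so every operation preserves the invariant.\<close>

lemma cbound_below_threshold: "r \<le> r0 \<Longrightarrow> cbound r0 r = 0"
  by (simp add: cbound_def)

lemma cbound_Suc_above_threshold:
  assumes "r0 < Suc r"
  shows "cbound r0 (Suc r) = 2 * cbound r0 r + 1"
proof -
  obtain k where k: "Suc r = Suc (r0 + k)"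
    using assms by (metis less_imp_Suc_add)
  have "(1::nat) \<le> 2 ^ k" by simp
  then have "(2::nat) * 2 ^ k - 1 = 2 * (2 ^ k - 1) + 1" by linarith
  then show ?thesis
    using k by (simp add: cbound_def)
qed

lemma cbound_le_Suc: "cbound r0 r \<le> cbound r0 (Suc r)"
  by (cases "Suc r \<le> r0") (auto simp: cbound_below_threshold cbound_Suc_above_threshold)

definition content_bounded :: "nat \<Rightarrow> nat \<Rightarrow> ('k, 'v) content \<Rightarrow> bool" where
  "content_bounded r0 r x =
     (case x of None \<Rightarrow> True | Some (e, C) \<Rightarrow> finite C \<and> card C \<le> cbound r0 r)"

definition tree_bounded :: "nat \<Rightarrow> nat \<Rightarrow> ('k, 'v) stree \<Rightarrow> bool" where
  "tree_bounded r0 r t = (\<forall>(r', e, C)\<in>node_items r t. finite C \<and> card C \<le> cbound r0 r')"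

definition heap_bounded :: "nat \<Rightarrow> ('k, 'v) sheap \<Rightarrow> bool" where
  "heap_bounded r0 h = (\<forall>(r, t)\<in>set h. tree_bounded r0 r t)"

lemma content_bounded_Suc: "content_bounded r0 r x \<Longrightarrow> content_bounded r0 (Suc r) x"
  using cbound_le_Suc[of r0 r] by (auto simp: content_bounded_def split: option.splits)

lemma content_bounded_merge:
  assumes "r0 < Suc r"
    and "content_bounded r0 r (Some (e1, C1))" and "content_bounded r0 r (Some (e2, C2))"
  shows "content_bounded r0 (Suc r) (Some (e2, C2 \<union> insert e1 C1))"
proof -
  have fin: "finite C1" "finite C2" and le: "card C1 \<le> cbound r0 r" "card C2 \<le> cbound r0 r"
    using assms(2,3) by (auto simp: content_bounded_def)
  have "card (C2 \<union> insert e1 C1) \<le> card C2 + card (insert e1 C1)"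
    by (rule card_Un_le)
  also have "\<dots> \<le> card C2 + (card C1 + 1)"
    using fin by (simp add: card_insert_if)
  also have "\<dots> \<le> cbound r0 (Suc r)"
    using le cbound_Suc_above_threshold[OF assms(1)] by linarith
  finally show ?thesis
    using fin by (simp add: content_bounded_def)
qed

lemma tree_bounded_T_Suc:
  "tree_bounded r0 (Suc r) (T x cs) \<longleftrightarrow>
     content_bounded r0 (Suc r) x \<and> (\<forall>c\<in>set cs. tree_bounded r0 r c)"
  unfolding tree_bounded_def content_bounded_def by (auto split: option.splits)

lemma tree_bounded_root: "tree_bounded r0 r t \<Longrightarrow> content_bounded r0 r (root t)"
  by (cases t) (auto simp: tree_bounded_def content_bounded_def split: option.splits)

lemma tree_bounded_shrink_corruption:
  "tree_bounded r0 r (T (Some (e, C)) cs) \<Longrightarrow> C' \<subseteq> C \<Longrightarrow> tree_bounded r0 r (T (Some (e, C')) cs)"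
  unfolding tree_bounded_def by (auto intro: le_trans[OF card_mono] finite_subset)

lemma tree_bounded_clear_root: "tree_bounded r0 r t \<Longrightarrow> tree_bounded r0 r (T None (kids t))"
  by (cases t) (auto simp: tree_bounded_def)

lemma pull_with_bounded:
  assumes "\<forall>c\<in>set cs. tree_bounded r0 r c"
    and "\<And>c. tree_bounded r0 r c \<Longrightarrow> tree_bounded r0 r (f (T None (kids c)))"
    and "pull_with f cs = (x, cs')"
  shows "content_bounded r0 r x \<and> (\<forall>c\<in>set cs'. tree_bounded r0 r c)"
proof -
  define I where "I = {i. i < length cs \<and> root (cs ! i) \<noteq> None}"
  show ?thesis
  proof (cases "I = {}")
    case True
    then show ?thesis
      using assms unfolding pull_with_def I_def[symmetric] by (auto simp: content_bounded_def)
  next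
    case False
    define i where "i = (ARG_MIN (\<lambda>i. ckey (root (cs ! i))) i. i \<in> I)"
    have "i \<in> I"
      using arg_min_if_finite(1)[OF _ False] unfolding i_def arg_min_on_def I_def by auto
    then have i: "i < length cs"
      by (simp add: I_def)
    have "x = root (cs ! i)" "cs' = cs[i := f (T None (kids (cs ! i)))]"
      using assms(3) False unfolding pull_with_def Let_def I_def[symmetric] i_def[symmetric]
      by auto
    moreover have "tree_bounded r0 r (cs ! i)"
      using i assms(1) by simp
    ultimately show ?thesis
      using assms(1,2) tree_bounded_root set_update_subset_insert[of cs i] by blast
  qed
qed

lemma fill_bounded:
  fixes t :: "('k::linorder, 'v) stree"
  shows "tree_bounded r0 r t \<Longrightarrow> tree_bounded r0 r (fill r0 r t)"
proof (induction r arbitrary: t)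
  case 0
  then show ?case by simp
next
  case (Suc r)
  obtain x cs where t: "t = T x cs" by (cases t)
  have cs: "\<forall>c\<in>set cs. tree_bounded r0 r c"
    using Suc.prems by (simp add: t tree_bounded_T_Suc)
  have refill: "tree_bounded r0 r (fill r0 r (T None (kids c)))"
    if "tree_bounded r0 r c" for c :: "('k, 'v) stree"
    using Suc.IH[OF tree_bounded_clear_root[OF that]] .
  obtain x1 cs1 where p1: "pull_with (fill r0 r) cs = (x1, cs1)"
    using prod.exhaust by blast
  obtain x2 cs2 where p2: "pull_with (fill r0 r) cs1 = (x2, cs2)"
    using prod.exhaust by blast
  have x1: "content_bounded r0 r x1" and cs1: "\<forall>c\<in>set cs1. tree_bounded r0 r c"
    using pull_with_bounded[OF cs refill p1] by auto
  have x2: "content_bounded r0 r x2" and cs2: "\<forall>c\<in>set cs2. tree_bounded r0 r c"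
    using pull_with_bounded[OF cs1 refill p2] by auto
  show ?case
  proof (cases "Suc r \<le> r0")
    case True
    then have "fill r0 (Suc r) t = T x1 cs1"
      using p1 t by simp
    moreover have "content_bounded r0 (Suc r) x1"
      using x1 True by (auto simp: content_bounded_def cbound_below_threshold split: option.splits)
    ultimately show ?thesis
      using cs1 by (simp add: tree_bounded_T_Suc)
  next
    case False
    then have above: "r0 < Suc r" by simp
    consider "x1 = None" | e1 C1 where "x1 = Some (e1, C1)" "x2 = None"
      | e1 C1 e2 C2 where "x1 = Some (e1, C1)" "x2 = Some (e2, C2)"
      by (metis option.exhaust surj_pair)
    then show ?thesis
    proof cases
      case 1
      then have "fill r0 (Suc r) t = T None cs1"
        using False p1 t by simp
      then show ?thesis
        using cs1 by (simp add: tree_bounded_T_Suc content_bounded_def)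
    next
      case (2 e1 C1)
      then have "fill r0 (Suc r) t = T x1 cs2"
        using False p1 p2 t by simp
      then show ?thesis
        using cs2 content_bounded_Suc[OF x1] by (simp add: tree_bounded_T_Suc)
    next
      case (3 e1 C1 e2 C2)
      then have "fill r0 (Suc r) t = T (Some (e2, C2 \<union> insert e1 C1)) cs2"
        using False p1 p2 t by simp
      then show ?thesis
        using cs2 content_bounded_merge[OF above] x1 x2 3 by (simp add: tree_bounded_T_Suc)
    qed
  qed
qed

lemma carry_bounded: "heap_bounded r0 h \<Longrightarrow> heap_bounded r0 (carry r0 h)"
proof (induction r0 h rule: carry.induct)
  case (1 r0 r1 t1 r2 t2 r3 t3 rest)
  show ?case
  proof (cases "r1 = r2 \<and> r2 = r3")
    case True
    have "tree_bounded r0 (Suc r1) (T None [t1, t2, t3])"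
      using "1.prems" True by (auto simp: heap_bounded_def tree_bounded_T_Suc content_bounded_def)
    then have "tree_bounded r0 (Suc r1) (fill r0 (Suc r1) (T None [t1, t2, t3]))"
      by (rule fill_bounded)
    then have "heap_bounded r0 ((Suc r1, fill r0 (Suc r1) (T None [t1, t2, t3])) # rest)"
      using "1.prems" by (auto simp: heap_bounded_def)
    then show ?thesis
      using "1.IH" True by (simp del: fill.simps)
  next
    case False
    then show ?thesis
      using "1.prems" by (simp only: carry.simps if_False)
  qed
qed auto

lemma sh_insert_bounded: "heap_bounded r0 h \<Longrightarrow> heap_bounded r0 (sh_insert r0 e h)"
  unfolding sh_insert_def
  by (rule carry_bounded) (auto simp: heap_bounded_def tree_bounded_def)

lemma heap_bounded_update:
  "heap_bounded r0 h \<Longrightarrow> tree_bounded r0 r t \<Longrightarrow> heap_bounded r0 (h[i := (r, t)])"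
  unfolding heap_bounded_def by (auto dest!: set_update_subset_insert[THEN subsetD])

lemma heap_bounded_nth:
  "heap_bounded r0 h \<Longrightarrow> i < length h \<Longrightarrow> h ! i = (r, t) \<Longrightarrow> tree_bounded r0 r t"
  unfolding heap_bounded_def by (metis (mono_tags, lifting) case_prodD nth_mem)

lemma extract_step_bounded:
  assumes "extract_step r0 h h'" and "heap_bounded r0 h"
  shows "heap_bounded r0 h'"
  using assms(1)
proof cases
  case (corrupted i r e C cs x)
  then have "tree_bounded r0 r (T (Some (e, C - {x})) cs)"
    using assms(2) heap_bounded_nth tree_bounded_shrink_corruption by blast
  then show ?thesis
    using corrupted assms(2) heap_bounded_update by blast
next
  case (clean i r e cs)
  then have "tree_bounded r0 r (T None cs)"
    using assms(2) heap_bounded_nth tree_bounded_clear_root by fastforce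
  then show ?thesis
    using clean assms(2) fill_bounded heap_bounded_update by blast
qed

lemma reachable_heap_bounded: "reachable r0 h \<Longrightarrow> heap_bounded r0 h"
  by (induction rule: reachable.induct)
    (simp_all add: heap_bounded_def[of r0 "[]"] sh_insert_bounded extract_step_bounded)

theorem mainTheorem10:
  fixes eps :: real and h :: "('k::linorder, 'v) sheap"
  assumes "0 < eps" and "eps < 1"
    and "reachable (threshold eps) h"
    and "(r, t) \<in> set h"
    and "(r', e, C) \<in> node_items r t"
  shows "finite C \<and> card C \<le> cbound (threshold eps) r'"
  using reachable_heap_bounded[OF assms(3)] assms(4,5)
  unfolding heap_bounded_def tree_bounded_def by fastforce

end
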